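(* The Banach algebra $M_{\mathbb{N}}(\mathbb{C})$ is symmetrically pseudo-amenable.
   Context: $M_{\mathbb{N}}(\mathbb{C})$ denotes the set of $\mathbb{N}\times\mathbb{N}$ complex matrices $(a_{ij})$ with $\|(a_{ij})\|=\sum_{i,j\in\mathbb{N}}|a_{ij}|<\infty$, a Banach algebra under this norm and the usual matrix multiplication. For a Banach algebra $\mathfrak{U}$, $\mathfrak{U}\widehat{\otimes}\mathfrak{U}$ is the projective tensor product, with $a(b\otimes c)=ab\otimes c$, $(b\otimes c)a=b\otimes ca$, and $\pi(b\otimes c)=bc$ (extended linearly and continuously). The flip is $(b\otimes c)^{\circ}=c\otimes b$; $\mathbf{t}$ is symmetric if $\mathbf{t}^\circ=\mathbf{t}$. An approximate diagonal is a net $\{\mathbf{t}_\lambda\}$ in $\mathfrak{U}\widehat{\otimes}\mathfrak{U}$ (not necessarily bounded) with $a\mathbf{t}_\lambda-\mathbf{t}_\lambda a\to0$ and $\pi(\mathbf{t}_\lambda)a\to a$ for all $a\in\mathfrak{U}$. $\mathfrak{U}$ is symmetrically pseudo-amenable if it has an approximate diagonal consisting of symmetric elements. *)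

theory Defs
  imports "HOL-Analysis.Analysis"
begin

text \<open>The Banach algebra M_N(C): N x N complex matrices with absolutely summable entries,
  represented as functions on nat x nat, carrier l1mat.\<close>

type_synonym mat = "nat \<times> nat \<Rightarrow> complex"

definition l1mat :: "mat set" where
  "l1mat = {a. (\<lambda>p. norm (a p)) summable_on UNIV}"

definition mnorm :: "mat \<Rightarrow> real" where
  "mnorm a = (\<Sum>\<^sub>\<infinity>p. norm (a p))"

definition mmult :: "mat \<Rightarrow> mat \<Rightarrow> mat" where
  "mmult a b = (\<lambda>(i, j). \<Sum>\<^sub>\<infinity>k. a (i, k) * b (k, j))"

definition bbil :: "(mat \<Rightarrow> mat \<Rightarrow> complex) \<Rightarrow> bool" where
  "bbil \<phi> \<longleftrightarrow>
     (\<forall>a\<in>l1mat. \<forall>b\<in>l1mat. \<forall>c\<in>l1mat. \<forall>z::complex.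
        \<phi> (\<lambda>p. a p + z * b p) c = \<phi> a c + z * \<phi> b c \<and>
        \<phi> c (\<lambda>p. a p + z * b p) = \<phi> c a + z * \<phi> c b) \<and>
     (\<exists>K. \<forall>a\<in>l1mat. \<forall>b\<in>l1mat. norm (\<phi> a b) \<le> K * mnorm a * mnorm b)"

text \<open>Projective tensor product M_N(C) hat-tensor M_N(C).  Every element is of the form
  sum_n b_n (x) c_n with sum_n |b_n| |c_n| < infinity; we represent elements by such sequences.
  Two representations denote the same tensor iff every bounded bilinear form (the dual of the
  projective tensor product) takes the same value on them.\<close>

type_synonym tens = "nat \<Rightarrow> mat \<times> mat"

definition trep :: "tens \<Rightarrow> bool" where
  "trep t \<longleftrightarrow> (\<forall>n. fst (t n) \<in> l1mat \<and> snd (t n) \<in> l1mat) \<and>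
               summable (\<lambda>n. mnorm (fst (t n)) * mnorm (snd (t n)))"

definition tpair :: "(mat \<Rightarrow> mat \<Rightarrow> complex) \<Rightarrow> tens \<Rightarrow> complex" where
  "tpair \<phi> t = (\<Sum>n. \<phi> (fst (t n)) (snd (t n)))"

definition teq :: "tens \<Rightarrow> tens \<Rightarrow> bool" where
  "teq t s \<longleftrightarrow> (\<forall>\<phi>. bbil \<phi> \<longrightarrow> tpair \<phi> t = tpair \<phi> s)"

definition pnorm :: "tens \<Rightarrow> real" where
  "pnorm t = Inf {(\<Sum>n. mnorm (fst (s n)) * mnorm (snd (s n))) | s. trep s \<and> teq s t}"

definition lmod :: "mat \<Rightarrow> tens \<Rightarrow> tens" where
  "lmod a t = (\<lambda>n. (mmult a (fst (t n)), snd (t n)))"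

definition rmod :: "tens \<Rightarrow> mat \<Rightarrow> tens" where
  "rmod t a = (\<lambda>n. (fst (t n), mmult (snd (t n)) a))"

definition tflip :: "tens \<Rightarrow> tens" where
  "tflip t = (\<lambda>n. (snd (t n), fst (t n)))"

definition tdiff :: "tens \<Rightarrow> tens \<Rightarrow> tens" where
  "tdiff t s = (\<lambda>n. if even n then t (n div 2)
                    else ((\<lambda>p. - fst (s (n div 2)) p), snd (s (n div 2))))"

definition tpi :: "tens \<Rightarrow> mat" where
  "tpi t = (\<lambda>p. \<Sum>n. mmult (fst (t n)) (snd (t n)) p)"

end

theory Submission
  imports Defs
begin

text \<open>
  The approximate diagonal is t_N = (1/N) \<Sum>_{i,j<N} E_ij \<otimes> E_ji. Swapping i and j shows
  that it is symmetric, and \<pi>(t_N) is the projection onto the first N coordinates, so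
  \<pi>(t_N) a - a only involves entries of a outside the N \<times> N corner.
  The corner b of a commutes exactly with t_N, so a t_N - t_N a is the same tensor as
  r t_N - t_N r for the tail r = a - b. In the obvious representation of the latter, every
  column and every row of r occurs N times with weight 1/N, so its projective norm is at
  most 2\<parallel>r\<parallel>, which tends to 0 because the entries of a are absolutely summable.
\<close>

lemma infsum_delta:
  fixes v :: "'b::{comm_monoid_add, t2_space}"
  shows "(\<Sum>\<^sub>\<infinity>k. if k = i then v else 0) = v"
proof -
  have "(\<Sum>\<^sub>\<infinity>k. if k = i then v else 0) = (\<Sum>\<^sub>\<infinity>k\<in>{i}. if k = i then v else 0)"
    by (rule infsum_cong_neutral) auto
  then show ?thesis by simp
qed

lemma sum_infsum_le_infsum:
  fixes f :: "'a \<Rightarrow> real"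
  assumes "f summable_on UNIV" "\<And>x. f x \<ge> 0" "finite I" "disjoint_family_on B I"
  shows "(\<Sum>i\<in>I. infsum f (B i)) \<le> infsum f UNIV"
proof -
  have "(\<Sum>i\<in>I. infsum f (B i)) = infsum f (\<Union>i\<in>I. B i)"
    using assms by (intro sum_infsum summable_on_subset_banach[OF assms(1)])
      (auto simp: disjoint_family_on_def)
  also have "\<dots> \<le> infsum f UNIV"
    using assms by (intro infsum_mono_neutral summable_on_subset_banach[OF assms(1)]) auto
  finally show ?thesis .
qed

lemma sum_lessThan_mult_div_mod:
  fixes g :: "nat \<Rightarrow> nat \<Rightarrow> 'a::comm_monoid_add"
  shows "(\<Sum>n<M * N. g (n div N) (n mod N)) = (\<Sum>i<M. \<Sum>j<N. g i j)"
proof -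
  have "(\<Sum>n\<in>{i * N..<i * N + N}. g (n div N) (n mod N)) = (\<Sum>j<N. g i j)" for i
    using sum.shift_bounds_nat_ivl[of "\<lambda>n. g (n div N) (n mod N)" 0 "i * N" N]
    by (simp add: atLeast0LessThan add.commute)
  then show ?thesis by (simp add: sum.nat_group[symmetric])
qed

lemma mnorm_nonneg: "mnorm x \<ge> 0"
  unfolding mnorm_def by (rule infsum_nonneg) simp

lemma l1mat_zero [simp]: "(\<lambda>_. 0) \<in> l1mat"
  unfolding l1mat_def by simp

lemma mnorm_zero [simp]: "mnorm (\<lambda>_. 0) = 0"
  unfolding mnorm_def by simp

lemma l1mat_norm_le:
  assumes "x \<in> l1mat" "\<And>p. norm (y p) \<le> norm (x p)"
  shows "y \<in> l1mat" "mnorm y \<le> mnorm x"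
proof -
  have x: "(\<lambda>p. norm (x p)) summable_on UNIV" using assms(1) unfolding l1mat_def by simp
  have y: "(\<lambda>p. norm (y p)) summable_on UNIV"
    by (rule summable_on_comparison_test[OF x]) (use assms in auto)
  then show "y \<in> l1mat" unfolding l1mat_def by simp
  show "mnorm y \<le> mnorm x" unfolding mnorm_def by (rule infsum_mono[OF y x]) (use assms in auto)
qed

lemma l1mat_scale: "x \<in> l1mat \<Longrightarrow> (\<lambda>p. c * x p) \<in> l1mat"
  unfolding l1mat_def by (simp add: norm_mult summable_on_cmult_right)

lemma mnorm_scale: "mnorm (\<lambda>p. c * x p) = norm c * mnorm x"
  unfolding mnorm_def norm_mult by (rule infsum_cmult_right')

lemma l1mat_add:
  assumes "x \<in> l1mat" "y \<in> l1mat"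
  shows "(\<lambda>p. x p + y p) \<in> l1mat"
proof -
  have "(\<lambda>p. norm (x p) + norm (y p)) summable_on UNIV"
    using assms unfolding l1mat_def by (intro summable_on_add) auto
  then have "(\<lambda>p. norm (x p + y p)) summable_on UNIV"
    by (rule summable_on_comparison_test) (auto intro: norm_triangle_ineq)
  then show ?thesis unfolding l1mat_def by simp
qed

lemma l1mat_uminus: "x \<in> l1mat \<Longrightarrow> (\<lambda>p. - x p) \<in> l1mat"
  unfolding l1mat_def by simp

lemma mnorm_uminus: "mnorm (\<lambda>p. - x p) = mnorm x"
  unfolding mnorm_def by simp

lemma l1mat_sum:
  assumes "finite I" "\<And>i. i \<in> I \<Longrightarrow> m i \<in> l1mat"
  shows "(\<lambda>p. \<Sum>i\<in>I. z i * m i p) \<in> l1mat"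
  using assms by (induction I rule: finite_induct) (auto intro!: l1mat_add l1mat_scale)

lemma l1mat_relocate:
  assumes "x \<in> l1mat" "inj_on h A"
    and "\<And>a. a \<in> A \<Longrightarrow> y (h a) = x a" "\<And>p. p \<notin> h ` A \<Longrightarrow> y p = 0"
  shows "y \<in> l1mat" "mnorm y = (\<Sum>\<^sub>\<infinity>a\<in>A. norm (x a))"
proof -
  have "(\<lambda>a. norm (x a)) summable_on A"
    using assms(1) unfolding l1mat_def by (auto intro: summable_on_subset_banach)
  then have "((\<lambda>a. norm (x a)) has_sum (\<Sum>\<^sub>\<infinity>a\<in>A. norm (x a))) A"
    by (rule has_sum_infsum)
  then have "(((\<lambda>p. norm (y p)) \<circ> h) has_sum (\<Sum>\<^sub>\<infinity>a\<in>A. norm (x a))) A"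
    by (rule has_sum_cong[THEN iffD1, rotated]) (simp add: assms(3))
  then have "((\<lambda>p. norm (y p)) has_sum (\<Sum>\<^sub>\<infinity>a\<in>A. norm (x a))) (h ` A)"
    by (simp add: has_sum_reindex[OF assms(2)])
  then have "((\<lambda>p. norm (y p)) has_sum (\<Sum>\<^sub>\<infinity>a\<in>A. norm (x a))) UNIV"
    by (rule has_sum_cong_neutral[THEN iffD1, rotated -1]) (auto simp: assms(4))
  then show "y \<in> l1mat" "mnorm y = (\<Sum>\<^sub>\<infinity>a\<in>A. norm (x a))"
    unfolding l1mat_def mnorm_def by (auto simp: has_sum_iff)
qed

definition unit_mat :: "nat \<Rightarrow> nat \<Rightarrow> mat" where
  "unit_mat i j = (\<lambda>p. if p = (i, j) then 1 else 0)"

lemma unit_mat_l1mat: "unit_mat i j \<in> l1mat"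
  and mnorm_unit_mat: "mnorm (unit_mat i j) = 1"
proof -
  have "(\<lambda>p. norm (unit_mat i j p)) summable_on UNIV
      \<longleftrightarrow> (\<lambda>p. norm (unit_mat i j p)) summable_on {(i, j)}"
    by (rule summable_on_cong_neutral) (auto simp: unit_mat_def)
  then show "unit_mat i j \<in> l1mat" unfolding l1mat_def by simp
  have "mnorm (unit_mat i j) = (\<Sum>\<^sub>\<infinity>p\<in>{(i, j)}. norm (unit_mat i j p))"
    unfolding mnorm_def by (rule infsum_cong_neutral) (auto simp: unit_mat_def)
  then show "mnorm (unit_mat i j) = 1" by (simp add: unit_mat_def)
qed

lemma mmult_zero_left [simp]: "mmult (\<lambda>_. 0) x = (\<lambda>_. 0)"
  unfolding mmult_def by auto

lemma mmult_zero_right [simp]: "mmult x (\<lambda>_. 0) = (\<lambda>_. 0)"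
  unfolding mmult_def by auto

lemma mmult_scale_left: "mmult (\<lambda>p. c * x p) y = (\<lambda>p. c * mmult x y p)"
  unfolding mmult_def by (auto simp: mult.assoc infsum_cmult_right')

lemma mmult_scale_right: "mmult x (\<lambda>p. c * y p) = (\<lambda>p. c * mmult x y p)"
  unfolding mmult_def by (auto simp: mult.left_commute infsum_cmult_right')

lemma mmult_unit_right: "mmult x (unit_mat i j) = (\<lambda>(p, q). if q = j then x (p, i) else 0)"
proof -
  have "(\<lambda>k. x (p, k) * unit_mat i j (k, q)) = (\<lambda>k. if k = i then (if q = j then x (p, i) else 0) else 0)"
    for p q by (auto simp: unit_mat_def)
  then show ?thesis unfolding mmult_def by (auto simp: infsum_delta)
qed

lemma mmult_unit_left: "mmult (unit_mat i j) x = (\<lambda>(p, q). if p = i then x (j, q) else 0)"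
proof -
  have "(\<lambda>k. unit_mat i j (p, k) * x (k, q)) = (\<lambda>k. if k = j then (if p = i then x (j, q) else 0) else 0)"
    for p q by (auto simp: unit_mat_def)
  then show ?thesis unfolding mmult_def by (auto simp: infsum_delta)
qed

lemma l1mat_mmult_unit_right:
  assumes "x \<in> l1mat"
  shows "mmult x (unit_mat i j) \<in> l1mat"
    and "mnorm (mmult x (unit_mat i j)) = (\<Sum>\<^sub>\<infinity>p\<in>UNIV \<times> {i}. norm (x p))"
proof -
  have "inj_on (\<lambda>(p, q). (p, j)) (UNIV \<times> {i})" by (auto simp: inj_on_def)
  from l1mat_relocate[OF assms this, where y = "mmult x (unit_mat i j)"]
  show "mmult x (unit_mat i j) \<in> l1mat"
    and "mnorm (mmult x (unit_mat i j)) = (\<Sum>\<^sub>\<infinity>p\<in>UNIV \<times> {i}. norm (x p))"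
    by (auto simp: mmult_unit_right image_iff)
qed

lemma l1mat_mmult_unit_left:
  assumes "x \<in> l1mat"
  shows "mmult (unit_mat i j) x \<in> l1mat"
    and "mnorm (mmult (unit_mat i j) x) = (\<Sum>\<^sub>\<infinity>p\<in>{j} \<times> UNIV. norm (x p))"
proof -
  have "inj_on (\<lambda>(p, q). (i, q)) ({j} \<times> UNIV)" by (auto simp: inj_on_def)
  from l1mat_relocate[OF assms this, where y = "mmult (unit_mat i j) x"]
  show "mmult (unit_mat i j) x \<in> l1mat"
    and "mnorm (mmult (unit_mat i j) x) = (\<Sum>\<^sub>\<infinity>p\<in>{j} \<times> UNIV. norm (x p))"
    by (auto simp: mmult_unit_left image_iff)
qed

lemma bbil_swap:
  assumes "bbil \<phi>"
  shows "bbil (\<lambda>a b. \<phi> b a)"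
proof -
  from assms obtain K where K: "\<forall>a\<in>l1mat. \<forall>b\<in>l1mat. norm (\<phi> a b) \<le> K * mnorm a * mnorm b"
    unfolding bbil_def by blast
  have "norm (\<phi> b a) \<le> K * mnorm a * mnorm b" if "a \<in> l1mat" "b \<in> l1mat" for a b
    using K[rule_format, OF that(2,1)] by (simp add: mult_ac)
  with assms show ?thesis unfolding bbil_def by blast
qed

lemma bbil_linear_left:
  assumes "bbil \<phi>" "a \<in> l1mat" "b \<in> l1mat" "c \<in> l1mat"
  shows "\<phi> (\<lambda>p. a p + z * b p) c = \<phi> a c + z * \<phi> b c"
  using assms unfolding bbil_def by blast

lemma bbil_zero_left: "bbil \<phi> \<Longrightarrow> c \<in> l1mat \<Longrightarrow> \<phi> (\<lambda>_. 0) c = 0"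
  using bbil_linear_left[of \<phi> "\<lambda>_. 0" "\<lambda>_. 0" c 1] by simp

lemma bbil_scale_left: "bbil \<phi> \<Longrightarrow> b \<in> l1mat \<Longrightarrow> c \<in> l1mat \<Longrightarrow> \<phi> (\<lambda>p. z * b p) c = z * \<phi> b c"
  using bbil_linear_left[of \<phi> "\<lambda>_. 0" b c z] bbil_zero_left[of \<phi> c] by simp

lemma bbil_scale_right: "bbil \<phi> \<Longrightarrow> b \<in> l1mat \<Longrightarrow> c \<in> l1mat \<Longrightarrow> \<phi> c (\<lambda>p. z * b p) = z * \<phi> c b"
  using bbil_scale_left[OF bbil_swap] .

lemma bbil_add_left:
  "bbil \<phi> \<Longrightarrow> a \<in> l1mat \<Longrightarrow> b \<in> l1mat \<Longrightarrow> c \<in> l1mat \<Longrightarrow> \<phi> (\<lambda>p. a p + b p) c = \<phi> a c + \<phi> b c"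
  using bbil_linear_left[of \<phi> a b c 1] by simp

lemma bbil_add_right:
  "bbil \<phi> \<Longrightarrow> a \<in> l1mat \<Longrightarrow> b \<in> l1mat \<Longrightarrow> c \<in> l1mat \<Longrightarrow> \<phi> c (\<lambda>p. a p + b p) = \<phi> c a + \<phi> c b"
  using bbil_add_left[OF bbil_swap] .

lemma bbil_uminus_left: "bbil \<phi> \<Longrightarrow> b \<in> l1mat \<Longrightarrow> c \<in> l1mat \<Longrightarrow> \<phi> (\<lambda>p. - b p) c = - \<phi> b c"
  using bbil_scale_left[of \<phi> b c "-1"] by simp

lemma bbil_sum_left:
  assumes "bbil \<phi>" "finite I" "\<And>i. i \<in> I \<Longrightarrow> m i \<in> l1mat" "c \<in> l1mat"
  shows "\<phi> (\<lambda>p. \<Sum>i\<in>I. z i * m i p) c = (\<Sum>i\<in>I. z i * \<phi> (m i) c)"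
  using assms(2,3)
proof (induction I rule: finite_induct)
  case empty
  then show ?case using bbil_zero_left[OF assms(1,4)] by simp
next
  case (insert k I)
  then have "\<phi> (\<lambda>p. (\<Sum>i\<in>I. z i * m i p) + z k * m k p) c
      = \<phi> (\<lambda>p. \<Sum>i\<in>I. z i * m i p) c + z k * \<phi> (m k) c"
    by (intro bbil_linear_left[OF assms(1)] l1mat_sum[OF insert.hyps(1)] assms(4)) auto
  with insert show ?case by (simp add: add.commute)
qed

lemma bbil_sum_right:
  "bbil \<phi> \<Longrightarrow> finite I \<Longrightarrow> (\<And>i. i \<in> I \<Longrightarrow> m i \<in> l1mat) \<Longrightarrow> c \<in> l1mat \<Longrightarrow>
    \<phi> c (\<lambda>p. \<Sum>i\<in>I. z i * m i p) = (\<Sum>i\<in>I. z i * \<phi> c (m i))"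
  using bbil_sum_left[OF bbil_swap] .

definition tzero :: "mat \<times> mat" where
  "tzero = ((\<lambda>_. 0), (\<lambda>_. 0))"

definition finite_tens :: "nat \<Rightarrow> tens \<Rightarrow> bool" where
  "finite_tens M t \<longleftrightarrow> (\<forall>n. fst (t n) \<in> l1mat \<and> snd (t n) \<in> l1mat) \<and> (\<forall>n\<ge>M. t n = tzero)"

definition rep_norm :: "tens \<Rightarrow> real" where
  "rep_norm t = (\<Sum>n. mnorm (fst (t n)) * mnorm (snd (t n)))"

lemma rep_norm_finite_tens:
  "finite_tens M t \<Longrightarrow> rep_norm t = (\<Sum>n<M. mnorm (fst (t n)) * mnorm (snd (t n)))"
  unfolding rep_norm_def by (rule suminf_finite) (auto simp: finite_tens_def tzero_def not_less)

lemma trep_finite_tens: "finite_tens M t \<Longrightarrow> trep t"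
  unfolding trep_def
  by (auto simp: finite_tens_def tzero_def intro!: summable_finite[of "{..<M}"] leI)

lemma tpair_finite_tens:
  "bbil \<phi> \<Longrightarrow> finite_tens M t \<Longrightarrow> tpair \<phi> t = (\<Sum>n<M. \<phi> (fst (t n)) (snd (t n)))"
  unfolding tpair_def
  by (rule suminf_finite) (auto simp: finite_tens_def tzero_def not_less bbil_zero_left)

lemma finite_tens_tflip: "finite_tens M t \<Longrightarrow> finite_tens M (tflip t)"
  unfolding finite_tens_def tflip_def tzero_def by auto

lemma finite_tens_tdiff:
  "finite_tens M X \<Longrightarrow> finite_tens M Y \<Longrightarrow> finite_tens (2 * M) (tdiff X Y)"
  unfolding finite_tens_def tdiff_def tzero_def by (auto intro: l1mat_uminus)

lemma sum_tdiff:
  fixes g :: "mat \<Rightarrow> mat \<Rightarrow> 'a::comm_monoid_add"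
  shows "(\<Sum>n<2 * M. g (fst (tdiff X Y n)) (snd (tdiff X Y n)))
    = (\<Sum>m<M. g (fst (X m)) (snd (X m)) + g (\<lambda>p. - fst (Y m) p) (snd (Y m)))"
  by (induction M) (simp_all add: tdiff_def add.assoc)

lemma tpair_tdiff:
  assumes "bbil \<phi>" "finite_tens M X" "finite_tens M Y"
  shows "tpair \<phi> (tdiff X Y) = (\<Sum>m<M. \<phi> (fst (X m)) (snd (X m)) - \<phi> (fst (Y m)) (snd (Y m)))"
  using assms(3)
  by (simp add: tpair_finite_tens[OF assms(1) finite_tens_tdiff[OF assms(2,3)]] sum_tdiff
      finite_tens_def bbil_uminus_left[OF assms(1)])

lemma rep_norm_tdiff:
  assumes "finite_tens M X" "finite_tens M Y"
  shows "rep_norm (tdiff X Y)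
    = (\<Sum>m<M. mnorm (fst (X m)) * mnorm (snd (X m)) + mnorm (fst (Y m)) * mnorm (snd (Y m)))"
  by (simp add: rep_norm_finite_tens[OF finite_tens_tdiff[OF assms]] mnorm_uminus
      sum_tdiff[of "\<lambda>a b. mnorm a * mnorm b"])

lemma pnorm_le_rep_norm: "trep s \<Longrightarrow> teq s t \<Longrightarrow> pnorm t \<le> rep_norm s"
  unfolding pnorm_def rep_norm_def
  by (rule cInf_lower) (auto intro!: bdd_belowI[of _ 0] suminf_nonneg simp: trep_def mnorm_nonneg)

lemma pnorm_nonneg: "trep t \<Longrightarrow> pnorm t \<ge> 0"
  unfolding pnorm_def
  by (rule cInf_greatest) (auto intro!: suminf_nonneg simp: trep_def teq_def mnorm_nonneg)

section \<open>The diagonal\<close>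

text \<open>The index n < N * N of t_N stands for the pair (n div N, n mod N).\<close>

definition diag_tens :: "nat \<Rightarrow> tens" where
  "diag_tens N = (\<lambda>n. if n < N * N
     then ((\<lambda>p. inverse (of_nat N) * unit_mat (n div N) (n mod N) p), unit_mat (n mod N) (n div N))
     else tzero)"

lemma finite_tens_diag_tens: "finite_tens (N * N) (diag_tens N)"
  unfolding finite_tens_def diag_tens_def tzero_def by (auto simp: l1mat_scale unit_mat_l1mat)

lemma teq_tflip_diag_tens: "teq (tflip (diag_tens N)) (diag_tens N)"
  unfolding teq_def
proof (intro allI impI)
  fix \<phi> assume \<phi>: "bbil \<phi>"
  let ?c = "inverse (of_nat N) :: complex"
  have "tpair \<phi> (tflip (diag_tens N)) = (\<Sum>i<N. \<Sum>j<N. ?c * \<phi> (unit_mat j i) (unit_mat i j))"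
    unfolding tpair_finite_tens[OF \<phi> finite_tens_tflip[OF finite_tens_diag_tens]]
    by (simp add: tflip_def diag_tens_def bbil_scale_right[OF \<phi>] unit_mat_l1mat
        sum_lessThan_mult_div_mod[of "\<lambda>i j. ?c * \<phi> (unit_mat j i) (unit_mat i j)"])
  also have "\<dots> = (\<Sum>j<N. \<Sum>i<N. ?c * \<phi> (unit_mat j i) (unit_mat i j))"
    by (rule sum.swap)
  also have "\<dots> = tpair \<phi> (diag_tens N)"
    unfolding tpair_finite_tens[OF \<phi> finite_tens_diag_tens]
    by (simp add: diag_tens_def bbil_scale_left[OF \<phi>] unit_mat_l1mat
        sum_lessThan_mult_div_mod[of "\<lambda>j i. ?c * \<phi> (unit_mat j i) (unit_mat i j)"])
  finally show "tpair \<phi> (tflip (diag_tens N)) = tpair \<phi> (diag_tens N)" .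
qed

definition proj_mat :: "nat \<Rightarrow> mat" where
  "proj_mat N = (\<lambda>(p, q). if p = q \<and> p < N then 1 else 0)"

lemma tpi_diag_tens: "tpi (diag_tens N) = proj_mat N"
proof (rule ext, clarify)
  fix p q
  let ?c = "inverse (of_nat N) :: complex"
  have "mmult (\<lambda>p. ?c * unit_mat i j p) (unit_mat j i) (p, q)
      = (if i = p then if q = p then ?c else 0 else 0)" for i j
    unfolding mmult_scale_left mmult_unit_left by (simp add: unit_mat_def)
  then have "tpi (diag_tens N) (p, q) = (\<Sum>i<N. \<Sum>j<N. if i = p then if q = p then ?c else 0 else 0)"
    unfolding tpi_def
    by (subst suminf_finite[of "{..<N * N}"])
      (auto simp: diag_tens_def tzero_def
        sum_lessThan_mult_div_mod[of "\<lambda>i j. if i = p then if q = p then ?c else 0 else 0"])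
  also have "\<dots> = proj_mat N (p, q)"
    by (auto simp: proj_mat_def sum.delta' if_distrib[of "(*) _"] cong: if_cong)
  finally show "tpi (diag_tens N) (p, q) = proj_mat N (p, q)" .
qed

lemma mmult_proj_mat: "mmult (proj_mat N) a = (\<lambda>(p, q). if p < N then a (p, q) else 0)"
proof -
  have "(\<lambda>k. proj_mat N (p, k) * a (k, q)) = (\<lambda>k. if k = p then (if p < N then a (p, q) else 0) else 0)"
    for p q by (auto simp: proj_mat_def)
  then show ?thesis unfolding mmult_def by (auto simp: infsum_delta)
qed

section \<open>Commutators with the diagonal\<close>

lemma lmod_diag_tens: "lmod x (diag_tens N) n = (if n < N * N
    then ((\<lambda>p. inverse (of_nat N) * mmult x (unit_mat (n div N) (n mod N)) p), unit_mat (n mod N) (n div N))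
    else tzero)"
  unfolding lmod_def diag_tens_def tzero_def by (simp add: mmult_scale_right)

lemma rmod_diag_tens: "rmod (diag_tens N) x n = (if n < N * N
    then ((\<lambda>p. inverse (of_nat N) * unit_mat (n div N) (n mod N) p), mmult (unit_mat (n mod N) (n div N)) x)
    else tzero)"
  unfolding rmod_def diag_tens_def tzero_def by simp

lemma finite_tens_lmod_diag_tens: "x \<in> l1mat \<Longrightarrow> finite_tens (N * N) (lmod x (diag_tens N))"
  unfolding finite_tens_def lmod_diag_tens
  by (auto simp: tzero_def unit_mat_l1mat l1mat_mmult_unit_right intro: l1mat_scale)

lemma finite_tens_rmod_diag_tens: "x \<in> l1mat \<Longrightarrow> finite_tens (N * N) (rmod (diag_tens N) x)"
  unfolding finite_tens_def rmod_diag_tens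
  by (auto simp: tzero_def unit_mat_l1mat l1mat_mmult_unit_left intro: l1mat_scale)

lemma trep_comm_diag_tens: "x \<in> l1mat \<Longrightarrow> trep (tdiff (lmod x (diag_tens N)) (rmod (diag_tens N) x))"
  by (rule trep_finite_tens[OF finite_tens_tdiff[OF finite_tens_lmod_diag_tens finite_tens_rmod_diag_tens]])

definition comm_term :: "(mat \<Rightarrow> mat \<Rightarrow> complex) \<Rightarrow> mat \<Rightarrow> nat \<Rightarrow> nat \<Rightarrow> complex" where
  "comm_term \<phi> x i j = \<phi> (mmult x (unit_mat i j)) (unit_mat j i) - \<phi> (unit_mat i j) (mmult (unit_mat j i) x)"

lemma tpair_comm_diag_tens:
  assumes "bbil \<phi>" "x \<in> l1mat"
  shows "tpair \<phi> (tdiff (lmod x (diag_tens N)) (rmod (diag_tens N) x))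
    = inverse (of_nat N) * (\<Sum>i<N. \<Sum>j<N. comm_term \<phi> x i j)"
proof -
  have "tpair \<phi> (tdiff (lmod x (diag_tens N)) (rmod (diag_tens N) x))
      = (\<Sum>n<N * N. inverse (of_nat N) * comm_term \<phi> x (n div N) (n mod N))"
    unfolding tpair_tdiff[OF assms(1) finite_tens_lmod_diag_tens[OF assms(2)]
        finite_tens_rmod_diag_tens[OF assms(2)]]
    by (intro sum.cong) (simp_all add: lmod_diag_tens rmod_diag_tens comm_term_def
        bbil_scale_left[OF assms(1)] unit_mat_l1mat l1mat_mmult_unit_right[OF assms(2)]
        l1mat_mmult_unit_left[OF assms(2)] right_diff_distrib)
  also have "\<dots> = (\<Sum>i<N. \<Sum>j<N. inverse (of_nat N) * comm_term \<phi> x i j)"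
    by (rule sum_lessThan_mult_div_mod)
  finally show ?thesis by (simp add: sum_distrib_left)
qed

lemma rep_norm_comm_diag_tens_le:
  assumes "x \<in> l1mat"
  shows "rep_norm (tdiff (lmod x (diag_tens N)) (rmod (diag_tens N) x)) \<le> 2 * mnorm x"
proof -
  let ?f = "\<lambda>p. norm (x p)"
  define col where "col i = (\<Sum>\<^sub>\<infinity>p\<in>UNIV \<times> {i}. ?f p)" for i
  define row where "row i = (\<Sum>\<^sub>\<infinity>p\<in>{i} \<times> UNIV. ?f p)" for i
  have f: "?f summable_on UNIV" using assms unfolding l1mat_def by simp
  have "rep_norm (tdiff (lmod x (diag_tens N)) (rmod (diag_tens N) x))
      = (\<Sum>n<N * N. inverse (real N) * (col (n div N) + row (n div N)))"
    unfolding rep_norm_tdiff[OF finite_tens_lmod_diag_tens[OF assms]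
        finite_tens_rmod_diag_tens[OF assms]]
    by (intro sum.cong) (simp_all add: lmod_diag_tens rmod_diag_tens mnorm_scale mnorm_unit_mat
        norm_inverse l1mat_mmult_unit_right[OF assms] l1mat_mmult_unit_left[OF assms] col_def row_def
        distrib_left)
  also have "\<dots> = (\<Sum>i<N. \<Sum>j<N. inverse (real N) * (col i + row i))"
    by (rule sum_lessThan_mult_div_mod[where g = "\<lambda>i j. inverse (real N) * (col i + row i)"])
  also have "\<dots> = (\<Sum>i<N. col i) + (\<Sum>i<N. row i)"
    by (cases "N = 0") (simp_all add: sum.distrib sum_distrib_left[symmetric] mult.assoc[symmetric])
  also have "\<dots> \<le> mnorm x + mnorm x"
    unfolding col_def row_def mnorm_def
    by (intro add_mono sum_infsum_le_infsum[OF f]) (auto simp: disjoint_family_on_def)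
  finally show ?thesis by simp
qed

definition corner_mat :: "nat \<Rightarrow> mat \<Rightarrow> mat" where
  "corner_mat N a = (\<lambda>(p, q). if p < N \<and> q < N then a (p, q) else 0)"

definition tail_mat :: "nat \<Rightarrow> mat \<Rightarrow> mat" where
  "tail_mat N a = (\<lambda>(p, q). if p < N \<and> q < N then 0 else a (p, q))"

lemma l1mat_tail_mat: "a \<in> l1mat \<Longrightarrow> tail_mat N a \<in> l1mat"
  and l1mat_corner_mat: "a \<in> l1mat \<Longrightarrow> corner_mat N a \<in> l1mat"
  by (auto intro: l1mat_norm_le(1) simp: tail_mat_def corner_mat_def)

lemma comm_term_add:
  assumes "bbil \<phi>" "x \<in> l1mat" "y \<in> l1mat"
  shows "comm_term \<phi> (\<lambda>p. x p + y p) i j = comm_term \<phi> x i j + comm_term \<phi> y i j"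
proof -
  have "mmult (\<lambda>p. x p + y p) (unit_mat i j) = (\<lambda>p. mmult x (unit_mat i j) p + mmult y (unit_mat i j) p)"
    and "mmult (unit_mat j i) (\<lambda>p. x p + y p) = (\<lambda>p. mmult (unit_mat j i) x p + mmult (unit_mat j i) y p)"
    by (auto simp: fun_eq_iff mmult_unit_right mmult_unit_left)
  then show ?thesis
    unfolding comm_term_def
    by (simp add: bbil_add_left[OF assms(1)] bbil_add_right[OF assms(1)] unit_mat_l1mat
        l1mat_mmult_unit_right assms(2,3) l1mat_mmult_unit_left)
qed

text \<open>
  The corner b commutes with t_N: both sums below equal the sum of b_il \<phi>(E_ij, E_jl)
  over i, j, l < N.
\<close>

lemma sum_comm_term_corner_mat:
  assumes "bbil \<phi>"
  shows "(\<Sum>i<N. \<Sum>j<N. comm_term \<phi> (corner_mat N a) i j) = 0"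
proof -
  let ?b = "corner_mat N a"
  define G where "G k j i = ?b (k, i) * \<phi> (unit_mat k j) (unit_mat j i)" for k j i
  have "mmult ?b (unit_mat i j) = (\<lambda>p. \<Sum>k<N. ?b (k, i) * unit_mat k j p)" for i j
    unfolding mmult_unit_right
    by (auto simp: fun_eq_iff corner_mat_def unit_mat_def if_distrib[of "(*) _"]
        sum.delta' cong: if_cong)
  then have left: "\<phi> (mmult ?b (unit_mat i j)) (unit_mat j i) = (\<Sum>k<N. G k j i)" for i j
    by (simp add: bbil_sum_left[OF assms] unit_mat_l1mat G_def)
  have "mmult (unit_mat j i) ?b = (\<lambda>p. \<Sum>l<N. ?b (i, l) * unit_mat j l p)" for i j
    unfolding mmult_unit_left
    by (auto simp: fun_eq_iff corner_mat_def unit_mat_def if_distrib[of "(*) _"]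
        sum.delta' cong: if_cong)
  then have right: "\<phi> (unit_mat i j) (mmult (unit_mat j i) ?b) = (\<Sum>l<N. G i j l)" for i j
    by (simp add: bbil_sum_right[OF assms] unit_mat_l1mat G_def)
  have "(\<Sum>i<N. \<Sum>j<N. \<Sum>k<N. G k j i) = (\<Sum>i<N. \<Sum>k<N. \<Sum>j<N. G k j i)"
    by (rule sum.cong[OF refl], rule sum.swap)
  also have "\<dots> = (\<Sum>k<N. \<Sum>i<N. \<Sum>j<N. G k j i)"
    by (rule sum.swap)
  also have "\<dots> = (\<Sum>k<N. \<Sum>j<N. \<Sum>i<N. G k j i)"
    by (rule sum.cong[OF refl], rule sum.swap)
  finally show ?thesis
    by (simp add: comm_term_def left right sum_subtractf)
qed

lemma teq_comm_diag_tens_tail_mat: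
  assumes "a \<in> l1mat"
  shows "teq (tdiff (lmod (tail_mat N a) (diag_tens N)) (rmod (diag_tens N) (tail_mat N a)))
             (tdiff (lmod a (diag_tens N)) (rmod (diag_tens N) a))"
  unfolding teq_def
proof (intro allI impI)
  fix \<phi> assume \<phi>: "bbil \<phi>"
  have "a = (\<lambda>p. tail_mat N a p + corner_mat N a p)"
    by (auto simp: fun_eq_iff tail_mat_def corner_mat_def)
  then have "comm_term \<phi> a i j = comm_term \<phi> (tail_mat N a) i j + comm_term \<phi> (corner_mat N a) i j" for i j
    by (metis comm_term_add[OF \<phi> l1mat_tail_mat[OF assms] l1mat_corner_mat[OF assms]])
  then show "tpair \<phi> (tdiff (lmod (tail_mat N a) (diag_tens N)) (rmod (diag_tens N) (tail_mat N a)))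
      = tpair \<phi> (tdiff (lmod a (diag_tens N)) (rmod (diag_tens N) a))"
    by (simp add: tpair_comm_diag_tens[OF \<phi>] assms l1mat_tail_mat sum.distrib
        sum_comm_term_corner_mat[OF \<phi>])
qed

lemma pnorm_comm_diag_tens_le:
  assumes "a \<in> l1mat"
  shows "pnorm (tdiff (lmod a (diag_tens N)) (rmod (diag_tens N) a)) \<le> 2 * mnorm (tail_mat N a)"
proof -
  have tail: "tail_mat N a \<in> l1mat" using assms by (rule l1mat_tail_mat)
  from pnorm_le_rep_norm[OF trep_comm_diag_tens[OF tail] teq_comm_diag_tens_tail_mat[OF assms]]
  show ?thesis using rep_norm_comm_diag_tens_le[OF tail, of N] by linarith
qed

lemma mnorm_tpi_diag_tens_mmult_diff_le:
  assumes "a \<in> l1mat"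
  shows "mnorm (\<lambda>p. mmult (tpi (diag_tens N)) a p - a p) \<le> mnorm (tail_mat N a)"
  by (rule l1mat_norm_le(2)[OF l1mat_tail_mat[OF assms]])
    (auto simp: tpi_diag_tens mmult_proj_mat tail_mat_def)

lemma filterlim_square_finite_subsets_at_top:
  "filterlim (\<lambda>N. {..<N} \<times> {..<N}) (finite_subsets_at_top UNIV) sequentially"
  unfolding filterlim_finite_subsets_at_top
proof (intro allI impI)
  fix X :: "(nat \<times> nat) set" assume "finite X \<and> X \<subseteq> UNIV"
  then obtain k where "fst ` X \<subseteq> {..<k}" "snd ` X \<subseteq> {..<k}"
    by (metis finite_imageI finite_nat_iff_bounded sup.bounded_iff finite_UnI)
  then have "X \<subseteq> {..<N} \<times> {..<N}" if "k \<le> N" for N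
    using that by force
  then show "\<forall>\<^sub>F N in sequentially.
      finite ({..<N} \<times> {..<N}) \<and> X \<subseteq> {..<N} \<times> {..<N} \<and> {..<N} \<times> {..<N} \<subseteq> UNIV"
    by (auto intro: eventually_sequentiallyI)
qed

lemma mnorm_tail_mat_tendsto_zero:
  assumes "a \<in> l1mat"
  shows "(\<lambda>N. mnorm (tail_mat N a)) \<longlonglongrightarrow> 0"
proof -
  let ?f = "\<lambda>p. norm (a p)" and ?B = "\<lambda>N::nat. {..<N} \<times> {..<N}"
  have f: "?f summable_on UNIV" using assms unfolding l1mat_def by simp
  have "mnorm (tail_mat N a) = (\<Sum>\<^sub>\<infinity>p\<in>UNIV - ?B N. ?f p)" for N
    unfolding mnorm_def by (rule infsum_cong_neutral) (auto simp: tail_mat_def split: if_splits)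
  also have "\<dots> N = mnorm a - sum ?f (?B N)" for N
    unfolding mnorm_def by (subst infsum_Diff[OF f]) auto
  finally have tail: "mnorm (tail_mat N a) = mnorm a - sum ?f (?B N)" for N .
  have "(\<lambda>N. sum ?f (?B N)) \<longlonglongrightarrow> mnorm a"
    unfolding mnorm_def
    by (rule filterlim_compose[OF infsum_tendsto[OF f] filterlim_square_finite_subsets_at_top])
  then have "(\<lambda>N. mnorm a - sum ?f (?B N)) \<longlonglongrightarrow> mnorm a - mnorm a"
    by (intro tendsto_diff tendsto_const)
  then show ?thesis unfolding tail by simp
qed

theorem theorem4p1:
  shows "\<exists>F :: tens filter. F \<noteq> bot \<and>
           (\<forall>\<^sub>F t in F. trep t \<and> teq (tflip t) t) \<and>
           (\<forall>a\<in>l1mat.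
              ((\<lambda>t. pnorm (tdiff (lmod a t) (rmod t a))) \<longlongrightarrow> 0) F \<and>
              ((\<lambda>t. mnorm (\<lambda>p. mmult (tpi t) a p - a p)) \<longlongrightarrow> 0) F)"
proof (intro exI conjI ballI)
  let ?F = "filtermap diag_tens sequentially"
  show "?F \<noteq> bot" by (simp add: filtermap_bot_iff)
  show "\<forall>\<^sub>F t in ?F. trep t \<and> teq (tflip t) t"
    by (simp add: eventually_filtermap trep_finite_tens[OF finite_tens_diag_tens] teq_tflip_diag_tens)
  fix a assume a: "a \<in> l1mat"
  note tail = mnorm_tail_mat_tendsto_zero[OF a]
  show "((\<lambda>t. pnorm (tdiff (lmod a t) (rmod t a))) \<longlongrightarrow> 0) ?F"
    unfolding filterlim_filtermap
    by (rule tendsto_sandwich[OF _ _ tendsto_const tendsto_mult_right_zero[OF tail, of 2]])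
      (simp_all add: pnorm_comm_diag_tens_le[OF a] pnorm_nonneg trep_comm_diag_tens[OF a])
  show "((\<lambda>t. mnorm (\<lambda>p. mmult (tpi t) a p - a p)) \<longlongrightarrow> 0) ?F"
    unfolding filterlim_filtermap
    by (rule tendsto_sandwich[OF _ _ tendsto_const tail])
      (simp_all add: mnorm_nonneg mnorm_tpi_diag_tens_mmult_diff_le[OF a])
qed

end
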